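(* If $f(t)$ is the $f$-polynomial of a simplicial complex, then $f(t)+t f'(t)$ is the $f$-polynomial of a simplicial complex. Equivalently, if $(1,f_0,\dots,f_{d-1})$ is the $f$-vector of a simplicial complex, then so is $(1,2f_0,3f_1,\dots,(d+1)f_{d-1})$.
   Context: A simplicial complex $\Delta$ on a finite ground set is a family of subsets closed under taking subsets; its $f$-vector is $(f_{-1},f_0,\dots,f_{d-1})$ with $f_i$ the number of faces of cardinality $i+1$ ($f_{-1}=1$), and its $f$-polynomial is $\sum_{i=0}^{d}f_{i-1}t^i$. *)

theory Defs
  imports "HOL-Computational_Algebra.Polynomial"
begin

definition simplicial_complex :: "'a set set \<Rightarrow> bool" where
  "simplicial_complex \<Delta> \<longleftrightarrow>
     finite (\<Union>\<Delta>) \<and> {} \<in> \<Delta> \<and> (\<forall>F\<in>\<Delta>. \<forall>G. G \<subseteq> F \<longrightarrow> G \<in> \<Delta>)"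

text \<open>f-vector entry f_i: number of faces of cardinality i+1 (index shifted: fvec k = f_{k-1}).\<close>
definition fvec :: "'a set set \<Rightarrow> nat \<Rightarrow> nat" where
  "fvec \<Delta> k = card {F \<in> \<Delta>. card F = k}"

definition f_poly :: "'a set set \<Rightarrow> int poly" where
  "f_poly \<Delta> = (\<Sum>i\<le>Max (card ` \<Delta>). monom (int (fvec \<Delta> i)) i)"

end

theory Submission
  imports Defs
begin

text \<open>Take as faces of the new complex the faces \<open>F\<close> of \<open>\<Delta>\<close> with at most one vertex marked.
  Such marked faces are again closed under subsets, and a face with \<open>k\<close> vertices carries
  \<open>k + 1\<close> markings, so the number of \<open>k\<close>-element faces becomes \<open>(k + 1) f\<^sub>k\<^sub>-\<^sub>1\<close>, which
  is the coefficient of \<open>t\<^sup>k\<close> in \<open>f(t) + t f'(t)\<close>. Relabelling the vertices by natural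
  numbers finishes the proof.\<close>

lemma simplicial_complex_finite:
  assumes "simplicial_complex \<Delta>"
  shows "finite \<Delta>"
  using assms unfolding simplicial_complex_def
  by (meson PowI Sup_upper finite_Pow_iff finite_subset subsetI)

lemma simplicial_complex_finite_face:
  assumes "simplicial_complex \<Delta>" "F \<in> \<Delta>"
  shows "finite F"
  using assms unfolding simplicial_complex_def by (meson Sup_upper finite_subset)

lemma coeff_f_poly:
  assumes "finite \<Delta>"
  shows "coeff (f_poly \<Delta>) i = int (fvec \<Delta> i)"
proof -
  let ?M = "Max (card ` \<Delta>)"
  have "coeff (f_poly \<Delta>) i = (if i \<le> ?M then int (fvec \<Delta> i) else 0)"
    unfolding f_poly_def by (simp add: coeff_sum sum.delta)
  moreover have "fvec \<Delta> i = 0" if "\<not> i \<le> ?M"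
  proof -
    have "card F \<noteq> i" if "F \<in> \<Delta>" for F
      using \<open>\<not> i \<le> ?M\<close> Max_ge[of "card ` \<Delta>" "card F"] assms that by auto
    then have "{F \<in> \<Delta>. card F = i} = {}" by blast
    then show ?thesis by (metis card.empty fvec_def)
  qed
  ultimately show ?thesis by simp
qed

lemma coeff_add_X_mult_pderiv:
  fixes p :: "'a :: {comm_semiring_1, semiring_no_zero_divisors} poly"
  shows "coeff (p + [:0, 1:] * pderiv p) i = of_nat (Suc i) * coeff p i"
  by (cases i) (simp_all add: coeff_pderiv algebra_simps)

lemma simplicial_complex_image:
  assumes "simplicial_complex \<Delta>"
  shows "simplicial_complex ((`) g ` \<Delta>)"
  unfolding simplicial_complex_def
proof (intro conjI ballI allI impI)
  show "finite (\<Union>((`) g ` \<Delta>))"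
    using assms unfolding simplicial_complex_def by (metis finite_imageI image_Union)
  show "{} \<in> (`) g ` \<Delta>"
    using assms unfolding simplicial_complex_def by force
  fix F H assume "F \<in> (`) g ` \<Delta>" "H \<subseteq> F"
  then obtain A where "A \<in> \<Delta>" "H \<subseteq> g ` A" by auto
  then have "H = g ` (A \<inter> g -` H)" by auto
  moreover have "A \<inter> g -` H \<in> \<Delta>"
    using assms \<open>A \<in> \<Delta>\<close> unfolding simplicial_complex_def by blast
  ultimately show "H \<in> (`) g ` \<Delta>" by blast
qed

lemma fvec_image:
  assumes "inj_on g (\<Union>\<Delta>)"
  shows "fvec ((`) g ` \<Delta>) k = fvec \<Delta> k"
proof -
  have inj: "inj_on ((`) g) \<Delta>"
  proof (rule inj_onI)
    fix A B assume "A \<in> \<Delta>" "B \<in> \<Delta>" "g ` A = g ` B"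
    then show "A = B" using inj_on_image_eq_iff[OF assms] by (meson Union_upper)
  qed
  have "card (g ` F) = card F" if "F \<in> \<Delta>" for F
    using assms that by (meson Sup_upper card_image inj_on_subset)
  then have "{F \<in> (`) g ` \<Delta>. card F = k} = (`) g ` {F \<in> \<Delta>. card F = k}"
    by auto
  moreover have "inj_on ((`) g) {F \<in> \<Delta>. card F = k}"
    using inj by (rule inj_on_subset) blast
  ultimately show ?thesis
    unfolding fvec_def by (simp add: card_image)
qed

definition markings :: "'a set \<Rightarrow> 'a option set" where
  "markings F = insert None (Some ` F)"

definition marked_face :: "'a set \<Rightarrow> 'a option \<Rightarrow> ('a \<times> bool) set" where
  "marked_face F m = (\<lambda>x. (x, m = Some x)) ` F"

definition marked_complex :: "'a set set \<Rightarrow> ('a \<times> bool) set set" where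
  "marked_complex \<Delta> = case_prod marked_face ` Sigma \<Delta> markings"

lemma fst_marked_face: "fst ` marked_face F m = F"
  unfolding marked_face_def by (simp add: image_image)

lemma card_marked_face: "card (marked_face F m) = card F"
  unfolding marked_face_def by (rule card_image) (auto simp: inj_on_def)

lemma card_markings: "finite F \<Longrightarrow> card (markings F) = Suc (card F)"
  unfolding markings_def by (simp add: card_image)

lemma marked_vertex_iff:
  assumes "m \<in> markings F"
  shows "(v, True) \<in> marked_face F m \<longleftrightarrow> m = Some v"
  using assms unfolding markings_def marked_face_def by auto

lemma marked_face_eq_iff:
  assumes "m \<in> markings F" "m' \<in> markings F'"
  shows "marked_face F m = marked_face F' m' \<longleftrightarrow> F = F' \<and> m = m'"
proof
  assume eq: "marked_face F m = marked_face F' m'"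
  then have "m = Some v \<longleftrightarrow> m' = Some v" for v
    using marked_vertex_iff[OF assms(1)] marked_vertex_iff[OF assms(2)] by metis
  then have "m = m'" by (metis option.exhaust)
  moreover have "F = F'" using eq by (metis fst_marked_face)
  ultimately show "F = F' \<and> m = m'" by simp
qed simp

lemma inj_on_marked_face: "inj_on (case_prod marked_face) (Sigma \<Delta> markings)"
  by (rule inj_onI) (auto simp: marked_face_eq_iff)

text \<open>A subset keeps the mark if it contains the marked vertex and loses it otherwise.\<close>
lemma subset_marked_face:
  assumes "H \<subseteq> marked_face F m"
  shows "\<exists>m' \<in> markings (fst ` H). H = marked_face (fst ` H) m'"
proof
  let ?m' = "if m \<in> Some ` fst ` H then m else None"
  have H: "\<And>x b. (x, b) \<in> H \<Longrightarrow> b = (m = Some x)"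
    using assms unfolding marked_face_def by auto
  have "?m' = Some x \<longleftrightarrow> m = Some x" if "x \<in> fst ` H" for x
    using that by auto
  then show "H = marked_face (fst ` H) ?m'"
    unfolding marked_face_def using H by force
  show "?m' \<in> markings (fst ` H)"
    unfolding markings_def by auto
qed

lemma simplicial_complex_marked_complex:
  assumes "simplicial_complex \<Delta>"
  shows "simplicial_complex (marked_complex \<Delta>)"
  unfolding simplicial_complex_def
proof (intro conjI ballI allI impI)
  have "\<Union>(marked_complex \<Delta>) \<subseteq> \<Union>\<Delta> \<times> UNIV"
    unfolding marked_complex_def marked_face_def by auto
  then show "finite (\<Union>(marked_complex \<Delta>))"
    using assms unfolding simplicial_complex_def by (simp add: finite_subset)
  have "({}, None) \<in> Sigma \<Delta> markings"
    using assms unfolding simplicial_complex_def markings_def by simp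
  moreover have "marked_face {} None = {}" by (simp add: marked_face_def)
  ultimately show "{} \<in> marked_complex \<Delta>"
    unfolding marked_complex_def by (metis case_prod_conv image_eqI)
  fix A H assume "A \<in> marked_complex \<Delta>" "H \<subseteq> A"
  then obtain F m where "F \<in> \<Delta>" "H \<subseteq> marked_face F m"
    unfolding marked_complex_def by auto
  then obtain m' where "m' \<in> markings (fst ` H)" "H = marked_face (fst ` H) m'"
    using subset_marked_face by blast
  moreover have "fst ` H \<in> \<Delta>"
    using assms \<open>F \<in> \<Delta>\<close> \<open>H \<subseteq> marked_face F m\<close> fst_marked_face
    unfolding simplicial_complex_def by (metis image_mono)
  ultimately show "H \<in> marked_complex \<Delta>"
    unfolding marked_complex_def by (metis SigmaI case_prod_conv image_eqI)
qed

lemma fvec_marked_complex: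
  assumes "finite \<Delta>" "\<And>F. F \<in> \<Delta> \<Longrightarrow> finite F"
  shows "fvec (marked_complex \<Delta>) k = Suc k * fvec \<Delta> k"
proof -
  let ?\<Delta>\<^sub>k = "{F \<in> \<Delta>. card F = k}"
  have "{A \<in> marked_complex \<Delta>. card A = k} = case_prod marked_face ` Sigma ?\<Delta>\<^sub>k markings"
    unfolding marked_complex_def by (auto simp: card_marked_face)
  then have "fvec (marked_complex \<Delta>) k = card (Sigma ?\<Delta>\<^sub>k markings)"
    unfolding fvec_def
    by (simp add: card_image inj_on_subset[OF inj_on_marked_face[of \<Delta>]] Sigma_mono)
  also have "\<dots> = (\<Sum>F\<in>?\<Delta>\<^sub>k. card (markings F))"
    using assms by (intro card_SigmaI) (auto simp: markings_def)
  also have "\<dots> = (\<Sum>F\<in>?\<Delta>\<^sub>k. Suc k)"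
    using assms by (intro sum.cong) (auto simp: card_markings)
  finally show ?thesis unfolding fvec_def by simp
qed

theorem proposition3p7:
  fixes \<Delta> :: "'a set set"
  assumes "simplicial_complex \<Delta>"
  shows "\<exists>\<Gamma> :: nat set set. simplicial_complex \<Gamma> \<and>
           f_poly \<Gamma> = f_poly \<Delta> + [:0, 1:] * pderiv (f_poly \<Delta>)"
proof -
  have marked: "simplicial_complex (marked_complex \<Delta>)"
    using assms by (rule simplicial_complex_marked_complex)
  then have "finite (\<Union>(marked_complex \<Delta>))"
    unfolding simplicial_complex_def by blast
  then obtain g :: "'a \<times> bool \<Rightarrow> nat" where g: "inj_on g (\<Union>(marked_complex \<Delta>))"
    using finite_imp_inj_to_nat_seg by blast
  define \<Gamma> where "\<Gamma> = (`) g ` marked_complex \<Delta>"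
  have \<Gamma>: "simplicial_complex \<Gamma>"
    unfolding \<Gamma>_def using marked by (rule simplicial_complex_image)
  have "fvec \<Gamma> i = Suc i * fvec \<Delta> i" for i
    unfolding \<Gamma>_def fvec_image[OF g]
    using assms simplicial_complex_finite simplicial_complex_finite_face
    by (intro fvec_marked_complex) blast+
  then have "coeff (f_poly \<Gamma>) i = of_nat (Suc i) * coeff (f_poly \<Delta>) i" for i
    using assms \<Gamma> by (simp add: coeff_f_poly simplicial_complex_finite algebra_simps)
  then have "f_poly \<Gamma> = f_poly \<Delta> + [:0, 1:] * pderiv (f_poly \<Delta>)"
    by (intro poly_eqI) (simp only: coeff_add_X_mult_pderiv)
  with \<Gamma> show ?thesis by blast
qed

end
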